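(* Let $\alpha>1$. There is a streaming algorithm which, given a weighted word $u$ as a data stream, constructs an $\alpha$-suffix decomposition of $u$ (and, with $t$ letter samplings per suffix, an $(\alpha,t)$-suffix sampling on $u$) of size at most $1+2\lceil\log|u|/\log\alpha\rceil$.
   Context: A weighted word has positive integer weights $|u(i)|$ on its positions, $|u|$ is the total weight. An $\alpha$-suffix decomposition of $u$ of size $s$ is a sequence of suffixes $u^1,\dots,u^s$ with $u^1=u$, $u^s$ the last letter of $u$, each $u^{l+1}$ a strict suffix of $u^l$, and whenever $|u^l|>\alpha|u^{l+1}|$ one has $u^l=a\cdot u^{l+1}$ for a single letter $a$. The letter sampling on $x$ outputs position $i$ with probability $|x(i)|/|x|$; an $(\alpha,t)$-suffix sampling is an $\alpha$-suffix decomposition with $t$ independent letter samplings on each of its suffixes. *)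

theory Defs
  imports "HOL-Probability.Probability_Mass_Function"
begin

text \<open>A weighted word over alphabet 'a is a list of (letter, weight) pairs; positions are
0-indexed. Weights are required to be positive wherever a weighted word is meant.\<close>

definition weight :: "('a \<times> nat) list \<Rightarrow> nat" where
  "weight u = sum_list (map snd u)"

definition suffix_weight :: "('a \<times> nat) list \<Rightarrow> nat \<Rightarrow> nat" where
  "suffix_weight u p = weight (drop p u)"

text \<open>An alpha-suffix decomposition, given by the list of starting positions of the
suffixes u^1, ..., u^s (u^l = drop (ps!l) u).\<close>
definition alpha_suffix_decomp :: "real \<Rightarrow> ('a \<times> nat) list \<Rightarrow> nat list \<Rightarrow> bool" where
  "alpha_suffix_decomp \<alpha> u ps \<longleftrightarrow>
     ps \<noteq> [] \<and> hd ps = 0 \<and> last ps = length u - 1 \<and> sorted_wrt (<) ps \<and>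
     (\<forall>l. Suc l < length ps \<longrightarrow>
        real (suffix_weight u (ps ! l)) > \<alpha> * real (suffix_weight u (ps ! Suc l)) \<longrightarrow>
        ps ! Suc l = ps ! l + 1)"

text \<open>Letter sampling on the suffix starting at p: position i (i >= p) with probability
weight(u(i)) / |suffix|.\<close>
definition letter_sampling :: "('a \<times> nat) list \<Rightarrow> nat \<Rightarrow> nat pmf" where
  "letter_sampling u p = pmf_of_multiset (\<Sum>i\<in>{p..<length u}. replicate_mset (snd (u ! i)) i)"

fun list_pmf :: "'b pmf list \<Rightarrow> 'b list pmf" where
  "list_pmf [] = return_pmf []"
| "list_pmf (p # ps) = bind_pmf p (\<lambda>x. bind_pmf (list_pmf ps) (\<lambda>xs. return_pmf (x # xs)))"

definition suffix_samples :: "nat \<Rightarrow> ('a \<times> nat) list \<Rightarrow> nat list \<Rightarrow> nat list list pmf" where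
  "suffix_samples t u ps = list_pmf (map (\<lambda>p. list_pmf (replicate t (letter_sampling u p))) ps)"

definition stream_run :: "'s \<Rightarrow> ('s \<Rightarrow> 'b \<Rightarrow> 's pmf) \<Rightarrow> 'b list \<Rightarrow> 's pmf" where
  "stream_run init step xs = fold (\<lambda>x M. bind_pmf M (\<lambda>s. step s x)) xs (return_pmf init)"

end

theory Submission
  imports Defs
begin

text \<open>The algorithm stores the starting positions of the current suffixes, their weights
  and t samples for each. When a letter of weight w arrives, every stored weight grows by w,
  every sample is replaced by the new position with probability w / (W + w) (reservoir
  sampling, so it stays an exact letter sampling of the longer suffix), and the one-letter
  suffix is appended. The positions are then thinned greedily: from a kept suffix we jump to
  the farthest later suffix of weight at least 1/\<alpha> times its weight, or to the next position
  if there is none. This keeps the \<alpha>-decomposition property, and afterwards suffixes two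
  steps apart differ in weight by a factor larger than \<alpha>, so at most 1 + 2\<lceil>log_\<alpha> |u|\<rceil>
  suffixes survive. Thinning only looks at weights, hence the samples of the surviving
  suffixes are still independent letter samplings.\<close>

section \<open>Greedy thinning of a weighted list\<close>

definition select_mask :: "bool list \<Rightarrow> 'b list \<Rightarrow> 'b list" where
  "select_mask m xs = map fst (filter snd (zip xs m))"

lemma select_mask_Nil [simp]: "select_mask m [] = []" "select_mask [] xs = []"
  by (simp_all add: select_mask_def)

lemma select_mask_Cons [simp]:
  "select_mask (b # m) (x # xs) = (if b then x # select_mask m xs else select_mask m xs)"
  by (simp add: select_mask_def)

lemma select_mask_replicate_False_append:
  "j \<le> length xs \<Longrightarrow> select_mask (replicate j False @ m) xs = select_mask m (drop j xs)"
proof (induction j arbitrary: xs)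
  case (Suc j)
  then show ?case by (cases xs) auto
qed simp

lemma select_mask_map: "select_mask m (map h xs) = map h (select_mask m xs)"
proof (induction xs arbitrary: m)
  case (Cons x xs)
  then show ?case by (cases m) auto
qed simp

definition close_prefix_len :: "real \<Rightarrow> ('b \<Rightarrow> nat) \<Rightarrow> 'b \<Rightarrow> 'b list \<Rightarrow> nat" where
  "close_prefix_len a f x ys = length (takeWhile (\<lambda>z. real (f x) \<le> a * real (f z)) ys)"

lemma close_prefix_len_le: "close_prefix_len a f x ys \<le> length ys"
  unfolding close_prefix_len_def by (rule length_takeWhile_le)

function prune_mask :: "real \<Rightarrow> ('b \<Rightarrow> nat) \<Rightarrow> 'b list \<Rightarrow> bool list" where
  "prune_mask a f [] = []"
| "prune_mask a f [x] = [True]"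
| "prune_mask a f (x # y # r) =
     True # replicate (close_prefix_len a f x (y # r) - 1) False
       @ prune_mask a f (drop (close_prefix_len a f x (y # r) - 1) (y # r))"
  by pat_completeness auto
termination
  by (relation "Wellfounded.measure (\<lambda>(a, f, xs). length xs)") auto

definition prune :: "real \<Rightarrow> ('b \<Rightarrow> nat) \<Rightarrow> 'b list \<Rightarrow> 'b list" where
  "prune a f xs = select_mask (prune_mask a f xs) xs"

lemma prune_Nil [simp]: "prune a f [] = []"
  by (simp add: prune_def)

lemma prune_single [simp]: "prune a f [x] = [x]"
  by (simp add: prune_def)

lemma prune_Cons_Cons:
  "prune a f (x # y # r) = x # prune a f (drop (close_prefix_len a f x (y # r) - 1) (y # r))"
  using close_prefix_len_le[of a f x "y # r"]
  by (simp add: prune_def select_mask_replicate_False_append)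

lemma prune_mask_map: "prune_mask a g (map h xs) = prune_mask a (g \<circ> h) xs"
proof (induction a "g \<circ> h" xs rule: prune_mask.induct)
  case (3 a x y r)
  have "close_prefix_len a g (h x) (map h (y # r)) = close_prefix_len a (g \<circ> h) x (y # r)"
    by (simp only: close_prefix_len_def takeWhile_map length_map o_def)
  then show ?case
    using 3 by (simp only: list.map prune_mask.simps drop_map[symmetric])
qed simp_all

lemma prune_eq_Nil_iff [simp]: "prune a f xs = [] \<longleftrightarrow> xs = []"
  by (cases "(a, f, xs)" rule: prune_mask.cases) (simp_all add: prune_Cons_Cons)

lemma hd_prune: "xs \<noteq> [] \<Longrightarrow> hd (prune a f xs) = hd xs"
  by (cases "(a, f, xs)" rule: prune_mask.cases) (simp_all add: prune_Cons_Cons)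

lemma drop_close_prefix_len_nonempty: "drop (close_prefix_len a f x (y # r) - 1) (y # r) \<noteq> []"
  using close_prefix_len_le[of a f x "y # r"] by simp

lemma set_prune: "set (prune a f xs) \<subseteq> set xs"
proof (induction a f xs rule: prune_mask.induct)
  case (3 a f x y r)
  then show ?case using set_drop_subset[of _ "y # r"] by (auto simp: prune_Cons_Cons)
qed simp_all

lemma set_tl_prune: "set (tl (prune a f xs)) \<subseteq> set (tl xs)"
  using set_prune set_drop_subset
  by (cases "(a, f, xs)" rule: prune_mask.cases) (fastforce simp: prune_Cons_Cons)+

lemma last_prune: "xs \<noteq> [] \<Longrightarrow> last (prune a f xs) = last xs"
proof (induction a f xs rule: prune_mask.induct)
  case (3 a f x y r)
  then show ?case
    using drop_close_prefix_len_nonempty[of a f x y r] by (simp add: prune_Cons_Cons)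
qed simp_all

lemma sorted_wrt_prune: "sorted_wrt R xs \<Longrightarrow> sorted_wrt R (prune a f xs)"
proof (induction a f xs rule: prune_mask.induct)
  case (3 a f x y r)
  then show ?case
    using set_prune[of a f] set_drop_subset[of _ "y # r"] sorted_wrt_drop[of R "y # r"]
    by (fastforce simp: prune_Cons_Cons)
qed simp_all

lemma close_prefix_len_last_close:
  assumes "0 < close_prefix_len a f x ys"
  shows "real (f x) \<le> a * real (f (hd (drop (close_prefix_len a f x ys - 1) ys)))"
proof -
  define P where "P = (\<lambda>z. real (f x) \<le> a * real (f z))"
  define k where "k = close_prefix_len a f x ys"
  have k: "k - 1 < length (takeWhile P ys)"
    using assms unfolding k_def close_prefix_len_def P_def by simp
  then have "k - 1 < length ys"
    using length_takeWhile_le[of P ys] by linarith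
  then have "hd (drop (k - 1) ys) = takeWhile P ys ! (k - 1)"
    using takeWhile_nth[OF k] by (simp add: hd_drop_conv_nth)
  moreover have "P (takeWhile P ys ! (k - 1))"
    using set_takeWhileD[OF nth_mem[OF k]] by blast
  ultimately show ?thesis by (simp add: P_def k_def)
qed

lemma not_close_after_close_prefix:
  assumes "a \<ge> 0" and "sorted_wrt (\<lambda>p q. f q < f p) ys"
    and "z \<in> set (drop (close_prefix_len a f x ys) ys)"
  shows "a * real (f z) < real (f x)"
proof -
  define P where "P = (\<lambda>z. real (f x) \<le> a * real (f z))"
  have "drop (close_prefix_len a f x ys) ys = dropWhile P ys"
    unfolding close_prefix_len_def P_def by (simp add: dropWhile_eq_drop)
  then obtain w ws where w: "drop (close_prefix_len a f x ys) ys = w # ws" "\<not> P w"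
    using assms(3) by (metis empty_iff hd_dropWhile list.set(1) list.collapse)
  have "sorted_wrt (\<lambda>p q. f q < f p) (w # ws)"
    using sorted_wrt_drop[OF assms(2), of "close_prefix_len a f x ys"] unfolding w(1) .
  then have "f z \<le> f w" using assms(3) w(1) by auto
  then have "a * real (f z) \<le> a * real (f w)" using assms(1) by (simp add: mult_left_mono)
  then show ?thesis using w(2) unfolding P_def by linarith
qed

text \<open>The condition of alpha_suffix_decomp, stated for consecutive list entries.\<close>

fun adjacent_or_close :: "real \<Rightarrow> (nat \<Rightarrow> nat) \<Rightarrow> nat list \<Rightarrow> bool" where
  "adjacent_or_close a S (p # q # r) \<longleftrightarrow>
     (q = Suc p \<or> real (S p) \<le> a * real (S q)) \<and> adjacent_or_close a S (q # r)"
| "adjacent_or_close a S _ \<longleftrightarrow> True"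

lemma adjacent_or_close_drop: "adjacent_or_close a S xs \<Longrightarrow> adjacent_or_close a S (drop j xs)"
proof (induction j arbitrary: xs)
  case (Suc j)
  then show ?case by (cases "(a, S, xs)" rule: adjacent_or_close.cases) auto
qed simp

lemma adjacent_or_close_shift:
  assumes "a \<ge> 1" and "adjacent_or_close a S xs" and "\<forall>p\<in>set xs. S' p = S p + w"
  shows "adjacent_or_close a S' xs"
  using assms
proof (induction a S xs rule: adjacent_or_close.induct)
  case (1 a S p q r)
  have "real (S' p) \<le> a * real (S' q)" if "real (S p) \<le> a * real (S q)"
  proof -
    have "real w \<le> a * real w" using "1.prems"(1) by (simp add: mult_le_cancel_right1)
    then show ?thesis using that "1.prems"(3) by (simp add: distrib_left)
  qed
  then show ?case using 1 by auto
qed simp_all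

lemma adjacent_or_close_snoc_Suc_last:
  "adjacent_or_close a S xs \<Longrightarrow> adjacent_or_close a S (xs @ [Suc (last xs)])"
  by (induction a S xs rule: adjacent_or_close.induct) auto

lemma adjacent_or_close_nth:
  "adjacent_or_close a S xs \<Longrightarrow> Suc l < length xs \<Longrightarrow>
    xs ! Suc l = Suc (xs ! l) \<or> real (S (xs ! l)) \<le> a * real (S (xs ! Suc l))"
proof (induction a S xs arbitrary: l rule: adjacent_or_close.induct)
  case (1 a S p q r)
  then show ?case by (cases l) auto
qed simp_all

lemma adjacent_or_close_prune:
  "adjacent_or_close a S xs \<Longrightarrow> adjacent_or_close a S (prune a S xs)"
proof (induction a S xs rule: prune_mask.induct)
  case (3 a S x y r)
  define k where "k = close_prefix_len a S x (y # r)"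
  define D where "D = drop (k - 1) (y # r)"
  have "D \<noteq> []" unfolding D_def k_def by (rule drop_close_prefix_len_nonempty)
  then have prune_D: "prune a S D = hd D # tl (prune a S D)"
    by (metis hd_prune list.collapse prune_eq_Nil_iff)
  have prune_xyr: "prune a S (x # y # r) = x # prune a S D"
    unfolding D_def k_def by (rule prune_Cons_Cons)
  have "adjacent_or_close a S D"
    using "3.prems" adjacent_or_close_drop[of a S "y # r" "k - 1"] unfolding D_def by simp
  then have "adjacent_or_close a S (prune a S D)"
    using "3.IH" unfolding D_def k_def by blast
  moreover have "hd D = Suc x \<or> real (S x) \<le> a * real (S (hd D))"
  proof (cases "k = 0")
    case True
    then show ?thesis using "3.prems" unfolding D_def by simp
  next
    case False
    then show ?thesis
      using close_prefix_len_last_close[of a S x "y # r"] unfolding D_def k_def by simp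
  qed
  ultimately show ?case
    using prune_D prune_xyr by (metis adjacent_or_close.simps(1))
qed simp_all

fun decays_two_apart :: "real \<Rightarrow> nat list \<Rightarrow> bool" where
  "decays_two_apart a (x # y # z # r) \<longleftrightarrow> a * real z < real x \<and> decays_two_apart a (y # z # r)"
| "decays_two_apart a _ \<longleftrightarrow> True"

lemma decays_two_apart_prune:
  assumes "a \<ge> 0" and "sorted_wrt (\<lambda>p q. f q < f p) xs"
  shows "decays_two_apart a (map f (prune a f xs))"
  using assms
proof (induction a f xs rule: prune_mask.induct)
  case (3 a f x y r)
  define k where "k = close_prefix_len a f x (y # r)"
  define D where "D = drop (k - 1) (y # r)"
  have "D \<noteq> []" unfolding D_def k_def by (rule drop_close_prefix_len_nonempty)
  then obtain G where prune_D: "prune a f D = hd D # G"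
    by (metis hd_prune list.collapse prune_eq_Nil_iff)
  have prune_xyr: "prune a f (x # y # r) = x # prune a f D"
    unfolding D_def k_def by (rule prune_Cons_Cons)
  have sorted_yr: "sorted_wrt (\<lambda>p q. f q < f p) (y # r)" using "3.prems"(2) by simp
  then have "decays_two_apart a (map f (prune a f D))"
    using "3.IH" "3.prems"(1) sorted_wrt_drop unfolding D_def k_def by blast
  moreover have "a * real (f g) < real (f x)" if "g \<in> set G" for g
  proof -
    have "set G \<subseteq> set (tl D)" using set_tl_prune[of a f D] prune_D by simp
    also have "set (tl D) \<subseteq> set (drop k (y # r))"
      unfolding D_def by (cases k) (auto simp: drop_Suc tl_drop)
    finally have "g \<in> set (drop k (y # r))" using that by blast
    then show ?thesis
      unfolding k_def by (rule not_close_after_close_prefix[OF "3.prems"(1) sorted_yr])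
  qed
  ultimately show ?case
    using prune_D prune_xyr by (cases G) simp_all
qed simp_all

lemma decays_two_apart_Cons: "decays_two_apart a (x # xs) \<Longrightarrow> decays_two_apart a xs"
  by (cases "(a, xs)" rule: decays_two_apart.cases) auto

lemma decays_two_apart_pow_le:
  assumes "a > 0" and "decays_two_apart a vs" and "2 * j < length vs"
  shows "a ^ j * real (vs ! (2 * j)) \<le> real (hd vs)"
  using assms(2,3)
proof (induction j arbitrary: vs)
  case (Suc j)
  then obtain x y z r where vs: "vs = x # y # z # r"
    by (cases "(a, vs)" rule: decays_two_apart.cases) auto
  have "decays_two_apart a (z # r)"
    using Suc.prems(1) vs by (auto dest: decays_two_apart_Cons)
  then have "a ^ j * real ((z # r) ! (2 * j)) \<le> real z"
    using Suc.IH[of "z # r"] Suc.prems(2) vs by simp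
  then have "a ^ Suc j * real (vs ! (2 * Suc j)) \<le> a * real z"
    using assms(1) vs by (simp add: mult.assoc mult_left_mono)
  also have "\<dots> < real (hd vs)" using Suc.prems(1) vs by simp
  finally show ?case by simp
qed (simp add: hd_conv_nth)

lemma length_le_of_decays_two_apart:
  assumes a: "a > 1" and decays: "decays_two_apart a vs" and desc: "sorted_wrt (>) vs"
    and pos: "0 \<notin> set vs" and ne: "vs \<noteq> []"
  shows "real (length vs) \<le> 1 + 2 * real_of_int \<lceil>ln (real (hd vs)) / ln a\<rceil>"
proof -
  define m where "m = (length vs - 1) div 2"
  define L where "L = ln (real (hd vs)) / ln a"
  have L: "L = log a (real (hd vs))" unfolding L_def log_def ..
  have hd_pos: "0 < real (hd vs)" using pos ne by (cases vs) auto
  have "2 * m < length vs" using ne unfolding m_def by (cases vs) auto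
  then have bound: "a ^ m * real (vs ! (2 * m)) \<le> real (hd vs)"
    using decays_two_apart_pow_le[OF _ decays] a by simp
  have nth_pos: "1 \<le> vs ! i" if "i < length vs" for i
    using pos nth_mem[OF that] by (cases "vs ! i") auto
  have "length vs \<noteq> 0" using ne by simp
  then have "length vs = 2 * m + 1 \<or> length vs = 2 * m + 2"
    unfolding m_def by presburger
  then consider "length vs = 2 * m + 1" | "length vs = 2 * m + 2"
    by blast
  then show ?thesis
  proof cases
    case 1
    then have "a ^ m \<le> a ^ m * real (vs ! (2 * m))"
      using mult_left_mono[of 1 "real (vs ! (2 * m))" "a ^ m"] nth_pos[of "2 * m"] a by simp
    then have "a ^ m \<le> real (hd vs)" using bound by linarith
    then have "real m \<le> L"
      unfolding L using a hd_pos by (simp add: le_log_iff powr_realpow)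
    then have "real m \<le> real_of_int \<lceil>L\<rceil>" using le_of_int_ceiling order_trans by blast
    then show ?thesis using 1 unfolding L_def by simp
  next
    case 2
    have "vs ! (2 * m + 1) < vs ! (2 * m)"
      using desc 2 by (simp add: sorted_wrt_iff_nth_less)
    then have "1 < real (vs ! (2 * m))" using nth_pos[of "2 * m + 1"] 2 by simp
    then have "a ^ m < a ^ m * real (vs ! (2 * m))"
      using mult_strict_left_mono[of 1 "real (vs ! (2 * m))" "a ^ m"] a by simp
    then have "a ^ m < real (hd vs)" using bound by linarith
    then have "real m < L"
      unfolding L using a hd_pos by (simp add: less_log_iff powr_realpow)
    then have "int m < \<lceil>L\<rceil>" by (simp add: less_ceiling_iff)
    then show ?thesis using 2 unfolding L_def by simp
  qed
qed

section \<open>Products of distributions\<close>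

lemma list_pmf_map_bind:
  "bind_pmf (list_pmf ps) (\<lambda>xs. list_pmf (map g xs)) = list_pmf (map (\<lambda>p. bind_pmf p g) ps)"
proof (induction ps)
  case (Cons p ps)
  have "bind_pmf (list_pmf (p # ps)) (\<lambda>xs. list_pmf (map g xs)) =
    bind_pmf p (\<lambda>x. bind_pmf (list_pmf ps) (\<lambda>xs. bind_pmf (g x)
      (\<lambda>y. bind_pmf (list_pmf (map g xs)) (\<lambda>ys. return_pmf (y # ys)))))"
    by (simp add: bind_assoc_pmf bind_return_pmf)
  also have "\<dots> = bind_pmf p (\<lambda>x. bind_pmf (g x) (\<lambda>y. bind_pmf (list_pmf ps)
      (\<lambda>xs. bind_pmf (list_pmf (map g xs)) (\<lambda>ys. return_pmf (y # ys)))))"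
    by (subst bind_commute_pmf) (rule refl)
  also have "\<dots> = list_pmf (map (\<lambda>p. bind_pmf p g) (p # ps))"
    by (simp add: bind_assoc_pmf[symmetric] Cons.IH)
  finally show ?case .
qed (simp add: bind_return_pmf)

lemma list_pmf_map2_bind:
  "length ps = length vs \<Longrightarrow>
   bind_pmf (list_pmf ps) (\<lambda>xs. list_pmf (map2 G xs vs)) =
   list_pmf (map2 (\<lambda>p v. bind_pmf p (\<lambda>x. G x v)) ps vs)"
proof (induction ps arbitrary: vs)
  case (Cons p ps)
  then obtain v vs' where vs: "vs = v # vs'" and len: "length ps = length vs'"
    by (cases vs) auto
  have "bind_pmf (list_pmf (p # ps)) (\<lambda>xs. list_pmf (map2 G xs vs)) =
    bind_pmf p (\<lambda>x. bind_pmf (list_pmf ps) (\<lambda>xs. bind_pmf (G x v)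
      (\<lambda>y. bind_pmf (list_pmf (map2 G xs vs')) (\<lambda>ys. return_pmf (y # ys)))))"
    by (simp add: bind_assoc_pmf bind_return_pmf vs)
  also have "\<dots> = bind_pmf p (\<lambda>x. bind_pmf (G x v) (\<lambda>y. bind_pmf (list_pmf ps)
      (\<lambda>xs. bind_pmf (list_pmf (map2 G xs vs')) (\<lambda>ys. return_pmf (y # ys)))))"
    by (subst bind_commute_pmf) (rule refl)
  also have "\<dots> = list_pmf (map2 (\<lambda>p v. bind_pmf p (\<lambda>x. G x v)) (p # ps) vs)"
    by (simp add: bind_assoc_pmf[symmetric] Cons.IH[OF len]) (simp add: bind_assoc_pmf vs)
  finally show ?case .
qed (simp add: bind_return_pmf)

lemma map_pmf_select_mask_list_pmf:
  "map_pmf (select_mask m) (list_pmf ps) = list_pmf (select_mask m ps)"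
proof (induction ps arbitrary: m)
  case (Cons p ps)
  show ?case
  proof (cases m)
    case Nil
    then show ?thesis by simp
  next
    case (Cons b m')
    then show ?thesis
      using Cons.IH[of m', symmetric]
      by (cases b) (simp_all add: map_bind_pmf bind_map_pmf map_pmf_comp,
                    simp_all add: map_pmf_def bind_assoc_pmf bind_return_pmf)
  qed
qed simp

lemma list_pmf_snoc_return:
  "list_pmf (ps @ [return_pmf z]) = map_pmf (\<lambda>xs. xs @ [z]) (list_pmf ps)"
  by (induction ps) (simp_all add: map_bind_pmf map_pmf_def bind_assoc_pmf bind_return_pmf)

lemma list_pmf_replicate_return: "list_pmf (replicate t (return_pmf z)) = return_pmf (replicate t z)"
  by (induction t) (simp_all add: bind_return_pmf)

lemma set_pmf_list_pmf:
  "xs \<in> set_pmf (list_pmf ps) \<Longrightarrow> list_all2 (\<lambda>x p. x \<in> set_pmf p) xs ps"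
  by (induction ps arbitrary: xs) auto

section \<open>Suffix weights and letter samplings\<close>

lemma suffix_weight_eq_sum: "suffix_weight u p = (\<Sum>i = p..<length u. snd (u ! i))"
proof (cases "p \<le> length u")
  case True
  have "suffix_weight u p = (\<Sum>i = 0..<length u - p. snd (u ! (i + p)))"
    unfolding suffix_weight_def weight_def sum_list_sum_nth using True by (simp add: add.commute)
  also have "\<dots> = (\<Sum>i = p..<length u. snd (u ! i))"
    using sum.shift_bounds_nat_ivl[of "\<lambda>i. snd (u ! i)" 0 p "length u - p"] True by simp
  finally show ?thesis .
qed (simp add: suffix_weight_def weight_def)

lemma suffix_weight_0 [simp]: "suffix_weight u 0 = weight u"
  by (simp add: suffix_weight_def)

lemma suffix_weight_snoc: "p \<le> length u \<Longrightarrow> suffix_weight (u @ [x]) p = suffix_weight u p + snd x"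
  by (simp add: suffix_weight_def weight_def)

lemma suffix_weight_last [simp]: "suffix_weight (u @ [x]) (length u) = snd x"
  by (simp add: suffix_weight_def weight_def)

lemma suffix_weight_le_weight: "suffix_weight u p \<le> weight u"
  unfolding suffix_weight_eq_sum suffix_weight_0[symmetric]
  by (intro sum_mono2) auto

lemma suffix_weight_pos:
  assumes "p < length u" and "\<forall>x\<in>set u. snd x > 0"
  shows "suffix_weight u p > 0"
proof -
  have "0 < snd (u ! p)" using assms by simp
  also have "snd (u ! p) \<le> suffix_weight u p"
    unfolding suffix_weight_eq_sum using assms(1) by (intro member_le_sum) auto
  finally show ?thesis .
qed

lemma suffix_weight_strict_antimono:
  assumes "p < q" and "q < length u" and "\<forall>x\<in>set u. snd x > 0"
  shows "suffix_weight u q < suffix_weight u p"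
proof -
  have "{p..<length u} = {p..<q} \<union> {q..<length u}" using assms by auto
  then have "suffix_weight u p = (\<Sum>i = p..<q. snd (u ! i)) + suffix_weight u q"
    unfolding suffix_weight_eq_sum by (simp add: sum.union_disjoint)
  moreover have "0 < snd (u ! p)" using assms by simp
  moreover have "snd (u ! p) \<le> (\<Sum>i = p..<q. snd (u ! i))"
    using assms(1) by (intro member_le_sum) auto
  ultimately show ?thesis by linarith
qed

lemma sorted_wrt_suffix_weight:
  assumes "sorted_wrt (<) ps" and "set ps \<subseteq> {..<length u}" and "\<forall>x\<in>set u. snd x > 0"
  shows "sorted_wrt (\<lambda>p q. suffix_weight u q < suffix_weight u p) ps"
proof (rule sorted_wrt_mono_rel[OF _ assms(1)])
  show "suffix_weight u q < suffix_weight u p" if "p \<in> set ps" "q \<in> set ps" "p < q" for p q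
    using that assms(2,3) by (intro suffix_weight_strict_antimono) auto
qed

lemma pmf_letter_sampling:
  assumes "suffix_weight u p > 0"
  shows "pmf (letter_sampling u p) j =
    (if p \<le> j \<and> j < length u then real (snd (u ! j)) else 0) / real (suffix_weight u p)"
proof -
  define M where "M = (\<Sum>i\<in>{p..<length u}. replicate_mset (snd (u ! i)) i)"
  have size_M: "size M = suffix_weight u p"
    unfolding M_def suffix_weight_eq_sum by simp
  then have "M \<noteq> {#}" using assms by auto
  moreover have "count M j = (if p \<le> j \<and> j < length u then snd (u ! j) else 0)"
    unfolding M_def by (simp add: count_sum sum.delta')
  ultimately show ?thesis
    unfolding letter_sampling_def M_def[symmetric] by (simp add: size_M)
qed

lemma set_pmf_letter_sampling:
  "suffix_weight u p > 0 \<Longrightarrow> set_pmf (letter_sampling u p) \<subseteq> {p..<length u}"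
  by (auto simp: set_pmf_eq pmf_letter_sampling split: if_splits)

lemma letter_sampling_last:
  "w > 0 \<Longrightarrow> letter_sampling (u @ [(c, w)]) (length u) = return_pmf (length u)"
  by (rule pmf_eqI) (auto simp: pmf_letter_sampling indicator_def nth_append)

definition replace_coin :: "nat \<Rightarrow> nat \<Rightarrow> nat \<Rightarrow> nat \<Rightarrow> nat pmf" where
  "replace_coin n w W i = map_pmf (\<lambda>b. if b then n else i) (bernoulli_pmf (real w / real (W + w)))"

lemma letter_sampling_snoc:
  assumes p: "p < length u" and pos: "suffix_weight u p > 0" and w: "w > 0"
  shows "letter_sampling (u @ [(c, w)]) p =
    bind_pmf (letter_sampling u p) (replace_coin (length u) w (suffix_weight u p))"
proof -
  let ?L = "letter_sampling u p" and ?q = "real w / real (suffix_weight u p + w)"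
  have q: "0 \<le> ?q" "?q \<le> 1" "1 - ?q = suffix_weight u p / (suffix_weight u p + w)"
    using w by (auto simp: field_simps)
  have "bind_pmf ?L (replace_coin (length u) w (suffix_weight u p))
      = bind_pmf (bernoulli_pmf ?q) (\<lambda>b. bind_pmf ?L (\<lambda>i. return_pmf (if b then length u else i)))"
    unfolding replace_coin_def map_pmf_def by (rule bind_commute_pmf)
  also have "\<dots> = bind_pmf (bernoulli_pmf ?q) (\<lambda>b. if b then return_pmf (length u) else ?L)"
    by (intro bind_pmf_cong refl) (auto simp: bind_return_pmf')
  also have "\<dots> = letter_sampling (u @ [(c, w)]) p"
  proof (rule pmf_eqI)
    fix j
    have "suffix_weight (u @ [(c, w)]) p = suffix_weight u p + w"
      using suffix_weight_snoc[of p u "(c, w)"] p by simp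
    then show "pmf (bind_pmf (bernoulli_pmf ?q) (\<lambda>b. if b then return_pmf (length u) else ?L)) j
        = pmf (letter_sampling (u @ [(c, w)]) p) j"
      using q pos p by (auto simp: pmf_bind pmf_letter_sampling indicator_def nth_append)
  qed
  finally show ?thesis ..
qed

lemma set_pmf_suffix_samples:
  assumes "ss \<in> set_pmf (suffix_samples t u ps)" and "\<forall>p\<in>set ps. suffix_weight u p > 0"
  shows "length ss = length ps" and "\<forall>l\<in>set ss. length l = t \<and> set l \<subseteq> {..<length u}"
proof -
  have ss: "list_all2 (\<lambda>x p. x \<in> set_pmf p) ss
      (map (\<lambda>p. list_pmf (replicate t (letter_sampling u p))) ps)"
    using assms(1) unfolding suffix_samples_def by (rule set_pmf_list_pmf)
  then show len: "length ss = length ps" by (simp add: list_all2_lengthD)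
  show "\<forall>l\<in>set ss. length l = t \<and> set l \<subseteq> {..<length u}"
  proof
    fix l assume "l \<in> set ss"
    then obtain j where j: "j < length ss" "l = ss ! j" by (auto simp: in_set_conv_nth)
    have "l \<in> set_pmf (list_pmf (replicate t (letter_sampling u (ps ! j))))"
      using ss j len by (auto simp: list_all2_conv_all_nth)
    then have l: "list_all2 (\<lambda>x p. x \<in> set_pmf p) l (replicate t (letter_sampling u (ps ! j)))"
      by (rule set_pmf_list_pmf)
    have "suffix_weight u (ps ! j) > 0" using assms(2) j len by simp
    then have "set_pmf (letter_sampling u (ps ! j)) \<subseteq> {..<length u}"
      by (rule order_trans[OF set_pmf_letter_sampling]) auto
    moreover have "set l \<subseteq> set_pmf (letter_sampling u (ps ! j))"
      using l by (auto simp: list_all2_conv_all_nth in_set_conv_nth)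
    ultimately show "length l = t \<and> set l \<subseteq> {..<length u}"
      using l by (auto dest: list_all2_lengthD)
  qed
qed

definition resample :: "nat \<Rightarrow> nat \<Rightarrow> nat list \<Rightarrow> nat \<Rightarrow> nat list pmf" where
  "resample n w is W = list_pmf (map (replace_coin n w W) is)"

lemma suffix_samples_resample:
  assumes ps: "set ps \<subseteq> {..<length u}" and pos: "\<forall>x\<in>set u. snd x > 0" and w: "w > 0"
  shows "bind_pmf (suffix_samples t u ps)
      (\<lambda>ss. list_pmf (map2 (resample (length u) w) ss (map (suffix_weight u) ps)))
    = suffix_samples t (u @ [(c, w)]) ps"
proof -
  let ?Q = "\<lambda>u p. list_pmf (replicate t (letter_sampling u p))"
  have "bind_pmf (?Q u p) (\<lambda>is. resample (length u) w is (suffix_weight u p)) = ?Q (u @ [(c, w)]) p"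
    if "p \<in> set ps" for p
  proof -
    have "p < length u" using that ps by auto
    then have "bind_pmf (letter_sampling u p) (replace_coin (length u) w (suffix_weight u p))
        = letter_sampling (u @ [(c, w)]) p"
      using letter_sampling_snoc suffix_weight_pos pos w by metis
    then show ?thesis
      unfolding resample_def list_pmf_map_bind by simp
  qed
  then show ?thesis
    unfolding suffix_samples_def
    by (simp add: list_pmf_map2_bind map2_map_map cong: map_cong)
qed

lemma suffix_samples_append_last:
  "w > 0 \<Longrightarrow> suffix_samples t (u @ [(c, w)]) (ps @ [length u]) =
    map_pmf (\<lambda>ss. ss @ [replicate t (length u)]) (suffix_samples t (u @ [(c, w)]) ps)"
  by (simp add: suffix_samples_def letter_sampling_last list_pmf_replicate_return list_pmf_snoc_return)

lemma map_pmf_select_mask_suffix_samples: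
  "map_pmf (select_mask m) (suffix_samples t u ps) = suffix_samples t u (select_mask m ps)"
  by (simp add: suffix_samples_def map_pmf_select_mask_list_pmf select_mask_map)

section \<open>The greedy suffix decomposition\<close>

function greedy_decomp :: "real \<Rightarrow> ('a \<times> nat) list \<Rightarrow> nat list" where
  "greedy_decomp a u = (if u = [] then [] else
     prune a (suffix_weight u) (greedy_decomp a (butlast u) @ [length u - 1]))"
  by auto
termination
  by (relation "Wellfounded.measure (\<lambda>(a, u). length u)") auto

declare greedy_decomp.simps [simp del]

lemma greedy_decomp_Nil [simp]: "greedy_decomp a [] = []"
  by (simp add: greedy_decomp.simps)

lemma greedy_decomp_snoc:
  "greedy_decomp a (u @ [x]) = prune a (suffix_weight (u @ [x])) (greedy_decomp a u @ [length u])"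
  by (simp add: greedy_decomp.simps[of a "u @ [x]"])

lemma set_greedy_decomp: "set (greedy_decomp a u) \<subseteq> {..<length u}"
  by (induction u rule: rev_induct) (use set_prune in \<open>fastforce simp: greedy_decomp_snoc\<close>)+

lemma sorted_greedy_decomp: "sorted_wrt (<) (greedy_decomp a u)"
proof (induction u rule: rev_induct)
  case (snoc x u)
  then show ?case
    using set_greedy_decomp[of a u]
    by (auto simp: greedy_decomp_snoc sorted_wrt_append intro!: sorted_wrt_prune)
qed simp

lemma greedy_decomp_eq_Nil_iff [simp]: "greedy_decomp a u = [] \<longleftrightarrow> u = []"
  by (cases u rule: rev_cases) (simp_all add: greedy_decomp_snoc)

lemma hd_greedy_decomp: "u \<noteq> [] \<Longrightarrow> hd (greedy_decomp a u) = 0"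
proof (induction u rule: rev_induct)
  case (snoc x u)
  then show ?case
    using greedy_decomp_snoc[of a "[]" x] by (cases "u = []") (simp_all add: greedy_decomp_snoc hd_prune)
qed simp

lemma last_greedy_decomp: "u \<noteq> [] \<Longrightarrow> last (greedy_decomp a u) = length u - 1"
  by (cases u rule: rev_cases) (simp_all add: greedy_decomp_snoc last_prune)

lemma length_greedy_decomp_le: "length (greedy_decomp a u) \<le> length u"
proof -
  have "length (greedy_decomp a u) = card (set (greedy_decomp a u))"
    using sorted_greedy_decomp[of a u] by (simp add: strict_sorted_iff distinct_card)
  also have "\<dots> \<le> length u"
    using card_mono[OF _ set_greedy_decomp[of a u]] by simp
  finally show ?thesis .
qed

lemma suffix_weight_greedy_decomp_pos:
  assumes "\<forall>x\<in>set u. snd x > 0" and "p \<in> set (greedy_decomp a u)"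
  shows "suffix_weight u p > 0"
  using set_greedy_decomp[of a u] assms by (intro suffix_weight_pos) auto

lemma adjacent_or_close_greedy_decomp:
  assumes "a \<ge> 1"
  shows "adjacent_or_close a (suffix_weight u) (greedy_decomp a u)"
proof (induction u rule: rev_induct)
  case (snoc x u)
  have "\<forall>p\<in>set (greedy_decomp a u). suffix_weight (u @ [x]) p = suffix_weight u p + snd x"
    using set_greedy_decomp[of a u] by (auto intro!: suffix_weight_snoc simp: subset_iff)
  then have "adjacent_or_close a (suffix_weight (u @ [x])) (greedy_decomp a u)"
    using adjacent_or_close_shift[OF assms snoc.IH] by blast
  then have "adjacent_or_close a (suffix_weight (u @ [x])) (greedy_decomp a u @ [length u])"
    using adjacent_or_close_snoc_Suc_last[of a _ "greedy_decomp a u"] last_greedy_decomp[of u a]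
    by (cases "u = []") auto
  then show ?case by (simp add: greedy_decomp_snoc adjacent_or_close_prune)
qed simp

lemma decays_two_apart_greedy_decomp:
  assumes "a \<ge> 0" and "\<forall>x\<in>set u. snd x > 0"
  shows "decays_two_apart a (map (suffix_weight u) (greedy_decomp a u))"
proof (cases u rule: rev_cases)
  case (snoc u' x)
  let ?c = "greedy_decomp a u' @ [length u']"
  have "sorted_wrt (<) ?c" and "set ?c \<subseteq> {..<length u}"
    using sorted_greedy_decomp[of a u'] set_greedy_decomp[of a u'] snoc
    by (auto simp: sorted_wrt_append)
  then have "sorted_wrt (\<lambda>p q. suffix_weight u q < suffix_weight u p) ?c"
    using assms(2) by (rule sorted_wrt_suffix_weight)
  then show ?thesis
    using decays_two_apart_prune[OF assms(1)] snoc by (simp add: greedy_decomp_snoc)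
qed simp

lemma alpha_suffix_decomp_greedy_decomp:
  assumes "a \<ge> 1" and "u \<noteq> []"
  shows "alpha_suffix_decomp a u (greedy_decomp a u)"
proof -
  let ?K = "greedy_decomp a u"
  have "?K ! Suc l = ?K ! l + 1"
    if "Suc l < length ?K" and "a * real (suffix_weight u (?K ! Suc l)) < real (suffix_weight u (?K ! l))"
    for l
    using adjacent_or_close_nth[OF adjacent_or_close_greedy_decomp[OF assms(1)] that(1)] that(2)
    by auto
  then show ?thesis
    unfolding alpha_suffix_decomp_def
    using assms(2) by (simp add: hd_greedy_decomp last_greedy_decomp sorted_greedy_decomp)
qed

lemma length_greedy_decomp:
  assumes a: "a > 1" and pos: "\<forall>x\<in>set u. snd x > 0" and ne: "u \<noteq> []"
  shows "real (length (greedy_decomp a u)) \<le> 1 + 2 * real_of_int \<lceil>ln (real (weight u)) / ln a\<rceil>"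
proof -
  let ?K = "greedy_decomp a u" and ?S = "suffix_weight u"
  have pos_S: "?S p > 0" if "p \<in> set ?K" for p
    using suffix_weight_greedy_decomp_pos[OF pos that] .
  have "sorted_wrt (\<lambda>p q. ?S q < ?S p) ?K"
    using sorted_greedy_decomp set_greedy_decomp pos by (rule sorted_wrt_suffix_weight)
  then have "sorted_wrt (>) (map ?S ?K)" by (simp add: sorted_wrt_map)
  moreover have "0 \<notin> set (map ?S ?K)" using pos_S by fastforce
  moreover have "decays_two_apart a (map ?S ?K)"
    using decays_two_apart_greedy_decomp[of a u] a pos by simp
  moreover have "hd (map ?S ?K) = weight u"
    using ne hd_greedy_decomp[of u a] by (simp add: hd_map)
  ultimately show ?thesis
    using length_le_of_decays_two_apart[OF a] ne by fastforce
qed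

section \<open>The streaming algorithm\<close>

definition encode_state :: "nat \<Rightarrow> nat list \<Rightarrow> nat list \<Rightarrow> nat list list \<Rightarrow> nat list" where
  "encode_state n ps ws ss = [n, length ps] @ ps @ ws @ concat ss"

fun chunks :: "nat \<Rightarrow> nat \<Rightarrow> nat list \<Rightarrow> nat list list" where
  "chunks t 0 xs = []"
| "chunks t (Suc k) xs = take t xs # chunks t k (drop t xs)"

definition decode_state :: "nat \<Rightarrow> nat list \<Rightarrow> nat \<times> nat list \<times> nat list \<times> nat list list" where
  "decode_state t s = (let k = s ! 1 in
     (s ! 0, take k (drop 2 s), take k (drop (2 + k) s), chunks t k (drop (2 + 2 * k) s)))"

lemma chunks_concat: "\<forall>l\<in>set ss. length l = t \<Longrightarrow> chunks t (length ss) (concat ss) = ss"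
  by (induction ss) auto

lemma decode_encode_state:
  "length ws = length ps \<Longrightarrow> length ss = length ps \<Longrightarrow> \<forall>l\<in>set ss. length l = t \<Longrightarrow>
    decode_state t (encode_state n ps ws ss) = (n, ps, ws, ss)"
  unfolding decode_state_def encode_state_def using chunks_concat[of ss t] by (simp add: mult_2)

text \<open>Pruning only inspects weights, so the mask can be computed from the stored weights.\<close>

definition stream_step :: "real \<Rightarrow> nat \<Rightarrow> nat list \<Rightarrow> 'a \<times> nat \<Rightarrow> nat list pmf" where
  "stream_step a t s x = (case decode_state t s of (n, ps, ws, ss) \<Rightarrow>
     let ws' = map (\<lambda>W. W + snd x) ws @ [snd x]; m = prune_mask a id ws' in
     map_pmf (\<lambda>ss'. encode_state (Suc n) (select_mask m (ps @ [n])) (select_mask m ws')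
         (select_mask m (ss' @ [replicate t n])))
       (list_pmf (map2 (resample n (snd x)) ss ws)))"

definition stream_output :: "nat \<Rightarrow> nat list \<Rightarrow> nat list \<times> nat list list" where
  "stream_output t s = (case decode_state t s of (n, ps, ws, ss) \<Rightarrow> (ps, ss))"

lemma stream_run_snoc:
  "stream_run init step (u @ [x]) = bind_pmf (stream_run init step u) (\<lambda>s. step s x)"
  by (simp add: stream_run_def)

lemma stream_step_encode_state:
  fixes a :: real and c :: 'a and w :: nat
  assumes ps: "set ps \<subseteq> {..<length u}" and len: "length ss = length ps"
    and lens: "\<forall>l\<in>set ss. length l = t"
  defines "S' \<equiv> suffix_weight (u @ [(c, w)])"
  shows "stream_step a t (encode_state (length u) ps (map (suffix_weight u) ps) ss) (c, w) =
    map_pmf (\<lambda>ss'. encode_state (Suc (length u)) (prune a S' (ps @ [length u]))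
        (map S' (prune a S' (ps @ [length u])))
        (select_mask (prune_mask a S' (ps @ [length u])) (ss' @ [replicate t (length u)])))
      (list_pmf (map2 (resample (length u) w) ss (map (suffix_weight u) ps)))"
proof -
  have decode: "decode_state t (encode_state (length u) ps (map (suffix_weight u) ps) ss) =
      (length u, ps, map (suffix_weight u) ps, ss)"
    using len lens by (intro decode_encode_state) auto
  have weights: "map (\<lambda>W. W + w) (map (suffix_weight u) ps) @ [w] = map S' (ps @ [length u])"
    using ps unfolding S'_def by (auto simp: subset_iff suffix_weight_snoc less_imp_le)
  have mask: "prune_mask a id (map S' (ps @ [length u])) = prune_mask a S' (ps @ [length u])"
    unfolding prune_mask_map by simp
  show ?thesis
    by (simp only: stream_step_def decode prod.case snd_conv Let_def weights mask
        select_mask_map prune_def)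
qed

lemma stream_run_greedy_decomp:
  assumes "\<forall>x\<in>set u. snd x > 0"
  shows "stream_run [0, 0] (stream_step a t) u =
    map_pmf (encode_state (length u) (greedy_decomp a u) (map (suffix_weight u) (greedy_decomp a u)))
      (suffix_samples t u (greedy_decomp a u))"
  using assms
proof (induction u rule: rev_induct)
  case Nil
  show ?case by (simp add: stream_run_def suffix_samples_def encode_state_def)
next
  case (snoc x u)
  obtain c w where x: "x = (c, w)" by (cases x)
  have w: "w > 0" and pos: "\<forall>x\<in>set u. snd x > 0" using snoc.prems x by auto
  define K where "K = greedy_decomp a u"
  define S' where "S' = suffix_weight (u @ [(c, w)])"
  define m where "m = prune_mask a S' (K @ [length u])"
  define K' where "K' = prune a S' (K @ [length u])"
  have K: "set K \<subseteq> {..<length u}" unfolding K_def by (rule set_greedy_decomp)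
  have "\<forall>p\<in>set K. suffix_weight u p > 0"
    using suffix_weight_greedy_decomp_pos[OF pos] unfolding K_def by blast
  note samples = set_pmf_suffix_samples[OF _ this]
  have "stream_run [0, 0] (stream_step a t) (u @ [(c, w)]) = bind_pmf (suffix_samples t u K)
      (\<lambda>ss. stream_step a t (encode_state (length u) K (map (suffix_weight u) K) ss) (c, w))"
    unfolding stream_run_snoc snoc.IH[OF pos] by (simp add: bind_map_pmf K_def)
  also have "\<dots> = map_pmf (\<lambda>ss'. encode_state (Suc (length u)) K' (map S' K')
        (select_mask m (ss' @ [replicate t (length u)])))
      (bind_pmf (suffix_samples t u K)
        (\<lambda>ss. list_pmf (map2 (resample (length u) w) ss (map (suffix_weight u) K))))"
    using stream_step_encode_state[OF K] samples unfolding K'_def m_def S'_def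
    by (simp add: map_bind_pmf cong: bind_pmf_cong)
  also have "\<dots> = map_pmf (\<lambda>ss. encode_state (Suc (length u)) K' (map S' K') (select_mask m ss))
      (suffix_samples t (u @ [(c, w)]) (K @ [length u]))"
    unfolding suffix_samples_resample[OF K pos w, where c = c] suffix_samples_append_last[OF w] map_pmf_comp
    by (simp add: o_def)
  also have "\<dots> = map_pmf (encode_state (Suc (length u)) K' (map S' K'))
      (suffix_samples t (u @ [(c, w)]) K')"
    unfolding K'_def prune_def m_def map_pmf_select_mask_suffix_samples[symmetric] map_pmf_comp
    by (simp add: o_def)
  finally show ?case
    unfolding x K'_def S'_def K_def greedy_decomp_snoc by simp
qed

lemma set_pmf_stream_run:
  assumes pos: "\<forall>x\<in>set u. snd x > 0"
    and s: "s \<in> set_pmf (stream_run [0, 0] (stream_step a t) u)"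
  obtains ss where "s = encode_state (length u) (greedy_decomp a u)
      (map (suffix_weight u) (greedy_decomp a u)) ss"
    and "length ss = length (greedy_decomp a u)"
    and "\<forall>l\<in>set ss. length l = t \<and> set l \<subseteq> {..<length u}"
proof -
  obtain ss where ss: "ss \<in> set_pmf (suffix_samples t u (greedy_decomp a u))"
    and "s = encode_state (length u) (greedy_decomp a u) (map (suffix_weight u) (greedy_decomp a u)) ss"
    using s unfolding stream_run_greedy_decomp[OF pos] by auto
  moreover have "\<forall>p\<in>set (greedy_decomp a u). suffix_weight u p > 0"
    using suffix_weight_greedy_decomp_pos[OF pos] by blast
  ultimately show ?thesis
    using that set_pmf_suffix_samples[OF ss] by blast
qed

lemma length_stream_state:
  assumes "\<forall>x\<in>set u. snd x > 0" and "s \<in> set_pmf (stream_run [0, 0] (stream_step a t) u)"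
  shows "length s = 2 + length (greedy_decomp a u) * (2 + t)"
proof -
  obtain ss where s: "s = encode_state (length u) (greedy_decomp a u)
      (map (suffix_weight u) (greedy_decomp a u)) ss"
    and len: "length ss = length (greedy_decomp a u)"
    and lens: "\<forall>l\<in>set ss. length l = t \<and> set l \<subseteq> {..<length u}"
    by (rule set_pmf_stream_run[OF assms])
  have "map length ss = map (\<lambda>_. t) ss" using lens by simp
  then have "length (concat ss) = (\<Sum>l\<leftarrow>ss. t)"
    by (simp only: length_concat)
  then have "length (concat ss) = length (greedy_decomp a u) * t"
    by (simp add: sum_list_triv len)
  then show ?thesis unfolding s encode_state_def by simp
qed

lemma stream_state_entries_le:
  assumes "\<forall>x\<in>set u. snd x > 0" and "s \<in> set_pmf (stream_run [0, 0] (stream_step a t) u)"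
  shows "\<forall>x\<in>set s. x \<le> max (length u) (weight u)"
proof -
  obtain ss where s: "s = encode_state (length u) (greedy_decomp a u)
      (map (suffix_weight u) (greedy_decomp a u)) ss"
    and "length ss = length (greedy_decomp a u)"
    and ss: "\<forall>l\<in>set ss. length l = t \<and> set l \<subseteq> {..<length u}"
    by (rule set_pmf_stream_run[OF assms])
  have "p \<le> length u" if "p \<in> set (greedy_decomp a u)" for p
    using that set_greedy_decomp[of a u] by auto
  moreover have "i \<le> length u" if "l \<in> set ss" "i \<in> set l" for l i
    using that ss by fastforce
  ultimately show ?thesis
    unfolding s encode_state_def
    using length_greedy_decomp_le[of a u] suffix_weight_le_weight[of u] by (auto simp: le_max_iff_disj)
qed

lemma length_stream_state_le:
  assumes a: "a > 1" and pos: "\<forall>x\<in>set u. snd x > 0"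
    and s: "s \<in> set_pmf (stream_run [0, 0] (stream_step a t) u)"
  shows "real (length s) \<le> real (8 + 3 * t) * (1 + ln (real (weight u)) / ln a)"
proof (cases "u = []")
  case True
  \<comment> \<open>The claim reads 2 \<le> 8 + 3 t here, since weight [] = 0 and ln 0 = 0.\<close>
  then show ?thesis using length_stream_state[OF pos s] by (simp add: weight_def)
next
  case False
  define L where "L = ln (real (weight u)) / ln a"
  have "weight u > 0" using suffix_weight_pos[of 0 u] False pos by simp
  then have L: "L \<ge> 0" unfolding L_def using a by simp
  have "real (length (greedy_decomp a u)) \<le> 3 + 2 * L"
    using length_greedy_decomp[OF a pos False] ceiling_correct[of L] unfolding L_def by linarith
  then have "real (length (greedy_decomp a u)) * (2 + real t) \<le> (3 + 2 * L) * (2 + real t)"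
    by (intro mult_right_mono) auto
  moreover have "(3 + 2 * L) * (2 + real t) + 2 \<le> real (8 + 3 * t) * (1 + L)"
    using L by (simp add: algebra_simps)
  moreover have "real (length s) = 2 + real (length (greedy_decomp a u)) * (2 + real t)"
    using length_stream_state[OF pos s] by (simp add: algebra_simps)
  ultimately show ?thesis unfolding L_def by linarith
qed

lemma stream_output_run:
  assumes "\<forall>x\<in>set u. snd x > 0"
  shows "map_pmf (stream_output t) (stream_run [0, 0] (stream_step a t) u) =
    map_pmf (Pair (greedy_decomp a u)) (suffix_samples t u (greedy_decomp a u))"
proof -
  have "\<forall>p\<in>set (greedy_decomp a u). suffix_weight u p > 0"
    using suffix_weight_greedy_decomp_pos[OF assms] by blast
  then show ?thesis
    unfolding stream_run_greedy_decomp[OF assms] map_pmf_comp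
    by (intro map_pmf_cong refl)
      (simp add: stream_output_def decode_encode_state set_pmf_suffix_samples)
qed

theorem mainTheorem10:
  fixes \<alpha> :: real and t :: nat
  assumes "\<alpha> > 1"
  shows "\<exists>(init :: nat list) (step :: nat list \<Rightarrow> 'a \<times> nat \<Rightarrow> nat list pmf)
            (out :: nat list \<Rightarrow> nat list \<times> nat list list) (C :: nat).
    \<forall>u :: ('a \<times> nat) list. (\<forall>x\<in>set u. snd x > 0) \<longrightarrow>
      (\<forall>s\<in>set_pmf (stream_run init step u).
          real (length s) \<le> real C * (1 + ln (real (weight u)) / ln \<alpha>) \<and>
          (\<forall>x\<in>set s. x \<le> max (length u) (weight u))) \<and>
      (u \<noteq> [] \<longrightarrow>
        (\<exists>D :: nat list pmf.
           (\<forall>ps\<in>set_pmf D. alpha_suffix_decomp \<alpha> u ps \<and>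
              real (length ps) \<le> 1 + 2 * real_of_int \<lceil>ln (real (weight u)) / ln \<alpha>\<rceil>) \<and>
           map_pmf out (stream_run init step u) =
             bind_pmf D (\<lambda>ps. map_pmf (Pair ps) (suffix_samples t u ps))))"
proof (intro exI[of _ "[0, 0]"] exI[of _ "stream_step \<alpha> t"] exI[of _ "stream_output t"]
    exI[of _ "8 + 3 * t"] allI impI conjI)
  fix u :: "('a \<times> nat) list"
  assume pos: "\<forall>x\<in>set u. snd x > 0"
  show "\<forall>s\<in>set_pmf (stream_run [0, 0] (stream_step \<alpha> t) u).
      real (length s) \<le> real (8 + 3 * t) * (1 + ln (real (weight u)) / ln \<alpha>) \<and>
      (\<forall>x\<in>set s. x \<le> max (length u) (weight u))"
    using length_stream_state_le[OF assms pos] stream_state_entries_le[OF pos] by blast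
next
  fix u :: "('a \<times> nat) list"
  assume pos: "\<forall>x\<in>set u. snd x > 0" and ne: "u \<noteq> []"
  show "\<exists>D. (\<forall>ps\<in>set_pmf D. alpha_suffix_decomp \<alpha> u ps \<and>
              real (length ps) \<le> 1 + 2 * real_of_int \<lceil>ln (real (weight u)) / ln \<alpha>\<rceil>) \<and>
           map_pmf (stream_output t) (stream_run [0, 0] (stream_step \<alpha> t) u) =
             bind_pmf D (\<lambda>ps. map_pmf (Pair ps) (suffix_samples t u ps))"
    using alpha_suffix_decomp_greedy_decomp[of \<alpha> u] length_greedy_decomp[OF assms pos ne]
      stream_output_run[OF pos] assms ne
    by (intro exI[of _ "return_pmf (greedy_decomp \<alpha> u)"]) (simp add: bind_return_pmf)
qed

end
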